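(* Let $\mathcal A\in\mathbb C^{n\times n}$ be nonsingular and suppose $\mathcal A=\mathcal P_1+\mathcal P_2$, where $\mathcal P_1,\mathcal P_2\in\mathbb C^{n\times n}$ are positive semidefinite (in the sense of the context). Let $\Sigma\in\mathbb C^{n\times n}$ be Hermitian positive definite, and let $\Gamma_{\mathrm{PPS}}$, $\tilde{\mathcal P}_1,\tilde{\mathcal P}_2,\tilde{\mathcal P}_+,\tilde{\mathcal P}_-$, $f$ and $\mathrm{ev}(\cdot)$ be as in the context. For $i=1,2$ and $x\in\mathbb C^n\setminus\{0\}$ define $$m_i(x):=f(\tilde{\mathcal P}_{3-i})\sqrt{\frac{x^*(\mathcal I+\tilde{\mathcal P}_i^*\tilde{\mathcal P}_i)x-x^*(\tilde{\mathcal P}_i+\tilde{\mathcal P}_i^* )x}{x^*(\mathcal I+\tilde{\mathcal P}_i^*\tilde{\mathcal P}_i)x+x^*(\tilde{\mathcal P}_i+\tilde{\mathcal P}_i^* )x}}.$$ Then $m_i(x)\le 1$ for $i=1,2$, and for every $\lambda\in\sigma(\Gamma_{\mathrm{PPS}})$ there exists a vector $x_\lambda\in\mathrm{ev}(\tilde{\mathcal P}_+^{-1}\tilde{\mathcal P}_-)$ such that $$|\lambda|\le\min\{m_1(x_\lambda),m_2(y_\lambda)\},\qquad y_\lambda:=(\mathcal I+\tilde{\mathcal P}_2)^{-1}(\mathcal I-\tilde{\mathcal P}_1)x_\lambda .$$ Consequently $$\rho(\Gamma_{\mathrm{PPS}})\le\max_{x_\lambda\in\mathrm{ev}(\tilde{\mathcal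 P}_+^{-1}\tilde{\mathcal P}_-)}\min\left\{m_1(x_\lambda),\,m_2\big((\mathcal I+\tilde{\mathcal P}_2)^{-1}(\mathcal I-\tilde{\mathcal P}_1)x_\lambda\big)\right\}\le 1.$$
   Context: A matrix $\mathcal P\in\mathbb C^{n\times n}$ is called positive semidefinite if $\mathcal P+\mathcal P^*$ is Hermitian positive semidefinite (HPSD), and positive definite (PD) if $\mathcal P+\mathcal P^*$ is Hermitian positive definite (HPD); $\mathcal P$ need not be Hermitian. $\mathcal I$ is the identity matrix, $\|\cdot\|$ the Euclidean (spectral) norm, $\sigma(\cdot)$ the spectrum, $\rho(\cdot)$ the spectral radius, and $\mathrm{ev}(M)$ denotes the set of all nonzero eigenvectors of a square matrix $M$. For HPD $\Sigma$, $\Sigma^{1/2}$ is its HPD square root. Given the splitting $\mathcal A=\mathcal P_1+\mathcal P_2$ and HPD $\Sigma$, the PPS iteration matrix is $\Gamma_{\mathrm{PPS}}=(\Sigma+\mathcal P_1)^{-1}(\Sigma-\mathcal P_2)(\Sigma+\mathcal P_2)^{-1}(\Sigma-\mathcal P_1)$. Set $\tilde{\mathcal P}_i=\Sigma^{-1/2}\mathcal P_i\Sigma^{-1/2}$ ($i=1,2$), $\tilde{\mathcal P}_+=(\mathcal I+\tilde{\mathcal P}_2)(\mathcal I+\tilde{\mathcal P}_1)$ and $\tilde{\mathcal P}_-=(\mathcal I-\tilde{\mathcal P}_2)(\mathcal I-\tilde{\mathcal P}_1)$. For a square matrix $\mathcal P$ with $\mathcal I+\mathcal P$ invertible, $f(\mathcal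 P):=\|(\mathcal I+\mathcal P)^{-1}(\mathcal I-\mathcal P)\|$. *)

theory Defs
  imports "HOL-Analysis.Analysis"
begin

definition cadj :: "complex^'n^'m \<Rightarrow> complex^'m^'n" where
  "cadj A = (\<chi> i j. cnj (A $ j $ i))"

definition cquad :: "complex^'n^'n \<Rightarrow> complex^'n \<Rightarrow> complex" where
  "cquad M x = (\<Sum>i\<in>UNIV. cnj (x $ i) * (M *v x) $ i)"

definition hpsd_mat :: "complex^'n^'n \<Rightarrow> bool" where
  "hpsd_mat H \<longleftrightarrow> cadj H = H \<and> (\<forall>x. 0 \<le> Re (cquad H x))"

definition hpd_mat :: "complex^'n^'n \<Rightarrow> bool" where
  "hpd_mat H \<longleftrightarrow> cadj H = H \<and> (\<forall>x. x \<noteq> 0 \<longrightarrow> 0 < Re (cquad H x))"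

text \<open>Positive semidefinite in the (non-Hermitian) sense of the paper: P + P^* is HPSD.\<close>
definition psd_gen :: "complex^'n^'n \<Rightarrow> bool" where
  "psd_gen P \<longleftrightarrow> hpsd_mat (P + cadj P)"

definition hpd_sqrt :: "complex^'n^'n \<Rightarrow> complex^'n^'n" where
  "hpd_sqrt S = (THE R. hpd_mat R \<and> R ** R = S)"

definition mat_spectrum :: "complex^'n^'n \<Rightarrow> complex set" where
  "mat_spectrum M = {l. \<exists>v. v \<noteq> 0 \<and> M *v v = l *s v}"

definition spec_radius :: "complex^'n^'n \<Rightarrow> real" where
  "spec_radius M = Max (norm ` mat_spectrum M)"

definition eigvecs :: "complex^'n^'n \<Rightarrow> (complex^'n) set" where
  "eigvecs M = {v. v \<noteq> 0 \<and> (\<exists>l. M *v v = l *s v)}"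

definition spec_norm :: "complex^'n^'n \<Rightarrow> real" where
  "spec_norm M = onorm (\<lambda>x. M *v x)"

definition fmap :: "complex^'n^'n \<Rightarrow> real" where
  "fmap P = spec_norm (matrix_inv (mat 1 + P) ** (mat 1 - P))"

definition Gamma_PPS :: "complex^'n^'n \<Rightarrow> complex^'n^'n \<Rightarrow> complex^'n^'n \<Rightarrow> complex^'n^'n" where
  "Gamma_PPS S P1 P2 = matrix_inv (S + P1) ** (S - P2) ** matrix_inv (S + P2) ** (S - P1)"

text \<open>m_i(x) with Q = tilde P_i and R = tilde P_{3-i}.\<close>
definition mval :: "complex^'n^'n \<Rightarrow> complex^'n^'n \<Rightarrow> complex^'n \<Rightarrow> real" where
  "mval Q R x = fmap R *
     sqrt ((Re (cquad (mat 1 + cadj Q ** Q) x) - Re (cquad (Q + cadj Q) x)) /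
           (Re (cquad (mat 1 + cadj Q ** Q) x) + Re (cquad (Q + cadj Q) x)))"

end

theory Submission
  imports Defs "HOL-Computational_Algebra.Fundamental_Theorem_Algebra"
begin

(* With R the HPD square root of Sigma and T_i = R^-1 P_i R^-1, the congruence
   Sigma +- P_i = R (I +- T_i) R turns an eigenpair (lambda, v) of Gamma_PPS into vectors
   x = R v and z with (I + T_2) z = (I - T_1) x and (I - T_2) z = lambda (I + T_1) x.
   The T_i are accretive, so their Cayley transforms are contractions:
   |(I - T) w| <= f(T) |(I + T) w| and f(T) <= 1.  Applying this to T_2 at z, resp. to T_1
   at x, gives |lambda| <= m_1(x) and |lambda| <= m_2(z).
   Since hpd_sqrt and spec_radius are defined through THE and Max, one also needs existence
   and uniqueness of the HPD square root (obtained by maximising Rayleigh quotients) and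
   finiteness and non-emptiness of the spectrum (through the characteristic polynomial). *)

section \<open>Self-adjoint maps on Euclidean spaces\<close>

definition selfadjoint :: "('a::real_inner \<Rightarrow> 'a) \<Rightarrow> bool" where
  "selfadjoint f \<longleftrightarrow> (\<forall>x y. inner x (f y) = inner (f x) y)"

definition pos_definite :: "('a::real_inner \<Rightarrow> 'a) \<Rightarrow> bool" where
  "pos_definite f \<longleftrightarrow> (\<forall>x. x \<noteq> 0 \<longrightarrow> 0 < inner x (f x))"

lemma linear_coeff_eq_0_if_quadratic_nonpos:
  fixes a b :: real
  assumes "\<And>t. 2 * t * a + t\<^sup>2 * b \<le> 0"
  shows "a = 0"
proof (rule ccontr)
  assume "a \<noteq> 0"
  define d where "d = \<bar>b\<bar> + 1"
  have "d > 0" and "2 * d + b > 0"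
    unfolding d_def by (simp_all add: abs_if)
  then have "0 < a\<^sup>2 * (2 * d + b) / d\<^sup>2"
    using \<open>a \<noteq> 0\<close> by simp
  also have "\<dots> = 2 * (a / d) * a + (a / d)\<^sup>2 * b"
    using \<open>d > 0\<close> by (simp add: field_simps power2_eq_square)
  finally show False
    using assms[of "a / d"] by simp
qed

lemma quadratic_form_max_on_subspace:
  fixes f :: "'a::euclidean_space \<Rightarrow> 'a"
  assumes "linear f" and "subspace S" and "S \<noteq> {0}"
  obtains v where "v \<in> S" "norm v = 1"
    "\<And>u. u \<in> S \<Longrightarrow> inner u (f u) \<le> inner v (f v) * (norm u)\<^sup>2"
proof -
  define K where "K = S \<inter> sphere 0 1"
  have normalize: "u /\<^sub>R norm u \<in> K" if "u \<in> S" "u \<noteq> 0" for u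
    using that subspace_scale[OF \<open>subspace S\<close>] unfolding K_def by auto
  have "compact K"
    unfolding K_def using closed_subspace[OF \<open>subspace S\<close>] compact_sphere by blast
  moreover have "K \<noteq> {}"
    using \<open>S \<noteq> {0}\<close> subspace_0[OF \<open>subspace S\<close>] normalize by blast
  moreover have "continuous_on K (\<lambda>u. inner u (f u))"
    using \<open>linear f\<close>
    by (intro continuous_on_inner continuous_on_id linear_continuous_on)
      (simp add: linear_conv_bounded_linear)
  ultimately obtain v where "v \<in> K" and max: "\<And>u. u \<in> K \<Longrightarrow> inner u (f u) \<le> inner v (f v)"
    by (metis continuous_attains_sup)
  have "inner u (f u) \<le> inner v (f v) * (norm u)\<^sup>2" if "u \<in> S" for u
  proof (cases "u = 0")
    case False
    have "inner u (f u) / (norm u)\<^sup>2 = inner (u /\<^sub>R norm u) (f (u /\<^sub>R norm u))"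
      by (simp add: linear_scale[OF \<open>linear f\<close>] power2_eq_square divide_inverse mult_ac)
    also have "\<dots> \<le> inner v (f v)"
      using max normalize[OF that False] .
    finally show ?thesis
      using False by (simp add: pos_divide_le_eq)
  qed (simp add: linear_0[OF \<open>linear f\<close>])
  then show thesis
    using that \<open>v \<in> K\<close> unfolding K_def by auto
qed

lemma eigenvector_if_max_quadratic_form:
  fixes f :: "'a::real_inner \<Rightarrow> 'a"
  assumes "linear f" "selfadjoint f" "subspace S" "f ` S \<subseteq> S" "v \<in> S" "norm v = 1"
    and max: "\<And>u. u \<in> S \<Longrightarrow> inner u (f u) \<le> inner v (f v) * (norm u)\<^sup>2"
  shows "f v = inner v (f v) *\<^sub>R v"
proof -
  define \<mu> where "\<mu> = inner v (f v)"
  have orth: "inner w (f v) - \<mu> * inner w v = 0" if "w \<in> S" for w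
  proof (rule linear_coeff_eq_0_if_quadratic_nonpos[where b = "inner w (f w) - \<mu> * inner w w"])
    fix t :: real
    have "v + t *\<^sub>R w \<in> S"
      using assms(3,5) that by (simp add: subspace_add subspace_scale)
    then have "inner (v + t *\<^sub>R w) (f (v + t *\<^sub>R w)) \<le> \<mu> * (norm (v + t *\<^sub>R w))\<^sup>2"
      unfolding \<mu>_def by (rule max)
    moreover have "inner v (f w) = inner w (f v)"
      using \<open>selfadjoint f\<close> by (simp add: selfadjoint_def inner_commute)
    moreover have "(norm (v + t *\<^sub>R w))\<^sup>2 = 1 + 2 * t * inner w v + t\<^sup>2 * inner w w"
      using \<open>norm v = 1\<close> unfolding power2_norm_eq_inner
      by (simp add: inner_add inner_commute[of v w] norm_eq_1 algebra_simps power2_eq_square)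
    ultimately show "2 * t * (inner w (f v) - \<mu> * inner w v) + t\<^sup>2 * (inner w (f w) - \<mu> * inner w w) \<le> 0"
      by (simp add: linear_add[OF \<open>linear f\<close>] linear_scale[OF \<open>linear f\<close>] \<mu>_def
          inner_add inner_commute[of v w] algebra_simps power2_eq_square)
  qed
  have "f v - \<mu> *\<^sub>R v \<in> S"
    using assms(3,4,5) by (simp add: image_subset_iff subspace_diff subspace_scale)
  from orth[OF this] have "inner (f v - \<mu> *\<^sub>R v) (f v - \<mu> *\<^sub>R v) = 0"
    by (simp add: inner_diff_right)
  then show ?thesis
    unfolding \<mu>_def by simp
qed

lemma selfadjoint_top_eigenvector:
  fixes f :: "'a::euclidean_space \<Rightarrow> 'a"
  assumes "linear f" "selfadjoint f" "subspace S" "f ` S \<subseteq> S" "S \<noteq> {0}"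
  obtains v where "v \<in> S" "norm v = 1" "f v = inner v (f v) *\<^sub>R v"
    "\<And>u. u \<in> S \<Longrightarrow> inner u (f u) \<le> inner v (f v) * (norm u)\<^sup>2"
  using quadratic_form_max_on_subspace[OF assms(1,3,5)]
    eigenvector_if_max_quadratic_form[OF assms(1-4)] by metis

lemma quadratic_form_nonpos_if_anticommutes:
  fixes d g h :: "'a::euclidean_space \<Rightarrow> 'a"
  assumes "linear d" "selfadjoint d" "linear g" "pos_definite g" "pos_definite h"
    and anticomm: "\<And>x. g (d x) + d (h x) = 0"
  shows "inner u (d u) \<le> 0"
proof -
  have "UNIV \<noteq> {0::'a}"
    using nonzero_Basis SOME_Basis by blast
  then obtain v where "norm v = 1" and eigen: "d v = inner v (d v) *\<^sub>R v"
    and max: "\<And>u. inner u (d u) \<le> inner v (d v) * (norm u)\<^sup>2"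
    using selfadjoint_top_eigenvector[OF assms(1,2) subspace_UNIV] by auto
  define \<mu> where "\<mu> = inner v (d v)"
  have "0 = inner v (g (d v)) + inner (d v) (h v)"
    using anticomm[of v] \<open>selfadjoint d\<close> by (metis inner_add_right inner_zero_right selfadjoint_def)
  also have "\<dots> = \<mu> * (inner v (g v) + inner v (h v))"
    by (subst (1 2) eigen) (simp add: linear_scale[OF \<open>linear g\<close>] \<mu>_def algebra_simps)
  finally have "\<mu> = 0"
    using \<open>norm v = 1\<close> \<open>pos_definite g\<close> \<open>pos_definite h\<close>
    by (smt (verit, best) mult_eq_0_iff norm_zero pos_definite_def)
  then show ?thesis
    using max unfolding \<mu>_def by simp
qed

lemma selfadjoint_eq_0_if_quadratic_form_0:
  fixes d :: "'a::real_inner \<Rightarrow> 'a"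
  assumes "linear d" "selfadjoint d" and zero: "\<And>u. inner u (d u) = 0"
  shows "d x = 0"
proof -
  have "inner (x + d x) (d (x + d x)) = 2 * inner (d x) (d x)"
    using zero[of x] zero[of "d x"] \<open>selfadjoint d\<close>
    by (simp add: linear_add[OF \<open>linear d\<close>] inner_add selfadjoint_def inner_commute)
  then show ?thesis
    using zero[of "x + d x"] by simp
qed

lemma pos_definite_sqrt_unique:
  fixes f g :: "'a::euclidean_space \<Rightarrow> 'a"
  assumes f: "linear f" "selfadjoint f" "pos_definite f"
    and g: "linear g" "selfadjoint g" "pos_definite g"
    and "f \<circ> f = g \<circ> g"
  shows "f = g"
proof
  fix x
  have ff: "f (f y) = g (g y)" for y
    using \<open>f \<circ> f = g \<circ> g\<close> by (metis comp_apply)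
  have sa: "selfadjoint (\<lambda>x. f x - g x)" "selfadjoint (\<lambda>x. g x - f x)"
    using f(2) g(2) by (simp_all add: selfadjoint_def inner_diff_left inner_diff_right)
  have "inner u (f u - g u) \<le> 0" for u
    by (rule quadratic_form_nonpos_if_anticommutes[OF linear_compose_sub[OF f(1) g(1)] sa(1) f(1,3) g(3)])
      (simp add: linear_diff[OF f(1)] ff)
  moreover have "inner u (g u - f u) \<le> 0" for u
    by (rule quadratic_form_nonpos_if_anticommutes[OF linear_compose_sub[OF g(1) f(1)] sa(2) g(1,3) f(3)])
      (simp add: linear_diff[OF g(1)] ff)
  ultimately have "inner u (f u - g u) = 0" for u
    by (smt (verit) inner_diff_right)
  then have "f x - g x = 0"
    by (rule selfadjoint_eq_0_if_quadratic_form_0[OF linear_compose_sub[OF f(1) g(1)] sa(1)])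
  then show "f x = g x" by simp
qed

section \<open>The complex inner product and adjoint matrices\<close>

definition cinner :: "complex^'n \<Rightarrow> complex^'n \<Rightarrow> complex" where
  "cinner x y = (\<Sum>i\<in>UNIV. cnj (x$i) * y$i)"

lemma cquad_eq_cinner: "cquad M x = cinner x (M *v x)"
  by (simp add: cquad_def cinner_def)

lemma Re_cinner: "Re (cinner x y) = inner x y"
  by (simp add: cinner_def inner_vec_def inner_complex_def Re_sum)

lemma cinner_commute: "cinner y x = cnj (cinner x y)"
  by (simp add: cinner_def mult.commute)

lemma cinner_self: "cinner x x = complex_of_real ((norm x)\<^sup>2)"
proof (rule complex_eqI)
  show "Re (cinner x x) = Re (complex_of_real ((norm x)\<^sup>2))"
    by (simp add: Re_cinner power2_norm_eq_inner)
qed (simp add: cinner_def Im_sum)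

lemma cinner_add_right: "cinner x (y + z) = cinner x y + cinner x z"
  by (simp add: cinner_def distrib_left sum.distrib)

lemma cinner_diff_right: "cinner x (y - z) = cinner x y - cinner x z"
  by (simp add: cinner_def right_diff_distrib sum_subtractf)

lemma cinner_diff_left: "cinner (x - y) z = cinner x z - cinner y z"
  by (simp add: cinner_def left_diff_distrib sum_subtractf)

lemma cinner_scale_right: "cinner x (c *s y) = c * cinner x y"
  by (simp add: cinner_def sum_distrib_left mult_ac)

lemma cinner_scale_left: "cinner (c *s x) y = cnj c * cinner x y"
  by (simp add: cinner_def sum_distrib_left mult_ac)

lemma cinner_zero_left [simp]: "cinner 0 y = 0"
  by (simp add: cinner_def)

lemma cinner_zero_right [simp]: "cinner x 0 = 0"
  by (simp add: cinner_def)

lemma cinner_cadj: "cinner x (A *v y) = cinner (cadj A *v x) y"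
proof -
  have "cinner x (A *v y) = (\<Sum>i\<in>UNIV. \<Sum>j\<in>UNIV. cnj (x$i) * A$i$j * y$j)"
    by (simp add: cinner_def matrix_vector_mult_def sum_distrib_left mult.assoc)
  also have "\<dots> = (\<Sum>j\<in>UNIV. \<Sum>i\<in>UNIV. cnj (x$i) * A$i$j * y$j)"
    by (rule sum.swap)
  also have "\<dots> = cinner (cadj A *v x) y"
    by (simp add: cinner_def cadj_def matrix_vector_mult_def sum_distrib_right sum_distrib_left mult_ac)
  finally show ?thesis .
qed

lemma cadj_cadj [simp]: "cadj (cadj A) = A"
  by (simp add: cadj_def vec_eq_iff)

lemma cadj_add: "cadj (A + B) = cadj A + cadj B"
  by (simp add: cadj_def vec_eq_iff)

lemma cadj_mult: "cadj (A ** B) = cadj B ** cadj A"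
  by (simp add: cadj_def matrix_matrix_mult_def vec_eq_iff mult.commute)

lemma cadj_id: "cadj (mat 1) = mat 1"
  by (simp add: cadj_def mat_def vec_eq_iff)

lemma matrix_inv_mult:
  fixes A :: "'a::semiring_1^'n^'n"
  assumes "invertible A"
  shows "A ** matrix_inv A = mat 1" and "matrix_inv A ** A = mat 1"
  using someI_ex[OF assms[unfolded invertible_def]] unfolding matrix_inv_def by auto

lemma matrix_inv_mult_vec_cancel:
  fixes A :: "'a::field^'n^'n"
  assumes "invertible A"
  shows "matrix_inv A *v (A *v x) = x" and "A *v (matrix_inv A *v x) = x"
  by (simp_all add: matrix_vector_mul_assoc matrix_inv_mult[OF assms])

lemma cadj_matrix_inv:
  assumes "invertible A" "cadj A = A"
  shows "cadj (matrix_inv A) = matrix_inv A"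
proof -
  have left_inv: "cadj (matrix_inv A) ** A = mat 1"
    using arg_cong[OF matrix_inv_mult(1)[OF assms(1)], of cadj] assms(2)
    by (simp add: cadj_mult cadj_id)
  have "cadj (matrix_inv A) = cadj (matrix_inv A) ** (A ** matrix_inv A)"
    by (simp add: matrix_inv_mult[OF assms(1)])
  also have "\<dots> = matrix_inv A"
    by (simp add: matrix_mul_assoc left_inv)
  finally show ?thesis .
qed

lemma selfadjoint_if_hermitian:
  assumes "cadj H = H"
  shows "selfadjoint ((*v) H)"
  unfolding selfadjoint_def
  by (metis Re_cinner assms cinner_cadj)

lemma hpd_mat_iff: "hpd_mat H \<longleftrightarrow> cadj H = H \<and> pos_definite ((*v) H)"
  by (simp add: hpd_mat_def pos_definite_def cquad_eq_cinner Re_cinner)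

lemma scaleR_eq_scale_of_real: "r *\<^sub>R (x::complex^'n) = complex_of_real r *s x"
  by (simp add: vec_eq_iff, simp add: scaleR_conv_of_real)

lemma norm_scale_vec: "norm (c *s (x::complex^'n)) = cmod c * norm x"
  unfolding norm_vec_def by (simp add: L2_set_right_distrib norm_mult)

lemma mat_mult_vec: "mat k *v x = k *s x"
  by (simp add: vec_eq_iff matrix_vector_mult_def mat_def if_distrib[of "\<lambda>a. a * _"] cong: if_cong)

section \<open>The Hermitian positive definite square root\<close>

definition rank_one :: "complex \<Rightarrow> complex^'n \<Rightarrow> complex^'n^'n" where
  "rank_one c v = (\<chi> i j. c * v$i * cnj (v$j))"

lemma rank_one_mult_vec: "rank_one c v *v x = (c * cinner v x) *s v"
  by (simp add: rank_one_def matrix_vector_mult_def cinner_def vec_eq_iff sum_distrib_left mult_ac)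

lemma cadj_rank_one: "cadj (rank_one c v) = rank_one (cnj c) v"
  by (simp add: rank_one_def cadj_def vec_eq_iff mult_ac)

definition hpd_root_on :: "(complex^'n) set \<Rightarrow> complex^'n^'n \<Rightarrow> complex^'n^'n \<Rightarrow> bool" where
  "hpd_root_on S H R \<longleftrightarrow> cadj R = R
     \<and> (\<forall>x. (\<forall>s\<in>S. cinner s x = 0) \<longrightarrow> R *v x = 0)
     \<and> (\<forall>x\<in>S. R *v (R *v x) = H *v x)
     \<and> (\<forall>x\<in>S. x \<noteq> 0 \<longrightarrow> 0 < inner x (R *v x))"

lemma hpd_root_on_zero: "hpd_root_on {0} H 0"
  by (simp add: hpd_root_on_def cadj_def vec_eq_iff)

context
  fixes H R' :: "complex^'n^'n" and S :: "(complex^'n) set" and v :: "complex^'n" and \<mu> :: real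
  assumes S: "vec.subspace S" and v: "v \<in> S" "cinner v v = 1"
    and eigen: "H *v v = complex_of_real \<mu> *s v" and \<mu>: "\<mu> > 0"
    and R': "hpd_root_on (S \<inter> {x. cinner v x = 0}) H R'"
begin

lemma deflation_mult_eigvec: "R' *v v = 0" and deflation_cinner_eigvec: "cinner v (R' *v y) = 0"
proof -
  have "cinner s v = 0" if "s \<in> S \<inter> {x. cinner v x = 0}" for s
    using that cinner_commute[of v s] by simp
  then show "R' *v v = 0"
    using R' unfolding hpd_root_on_def by blast
  then show "cinner v (R' *v y) = 0"
    using R' cinner_cadj[of v R' y] by (simp add: hpd_root_on_def)
qed

lemma deflation_split:
  assumes "x \<in> S"
  shows "x - cinner v x *s v \<in> S \<inter> {x. cinner v x = 0}"
    and "R' *v x = R' *v (x - cinner v x *s v)"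
  using assms S v by (simp_all add: vec.subspace_diff vec.subspace_scale cinner_diff_right
      cinner_scale_right vec.diff vec.scale deflation_mult_eigvec)

lemma deflation_mult_vec:
  "(R' + rank_one (sqrt \<mu>) v) *v x = R' *v x + (sqrt \<mu> * cinner v x) *s v"
  by (simp add: matrix_vector_mult_add_rdistrib rank_one_mult_vec)

lemma deflation_square:
  assumes "x \<in> S"
  shows "(R' + rank_one (sqrt \<mu>) v) *v ((R' + rank_one (sqrt \<mu>) v) *v x) = H *v x"
proof -
  define a where "a = cinner v x"
  define x' where "x' = x - a *s v"
  have "x' \<in> S" "cinner v x' = 0" and R'_x: "R' *v x = R' *v x'"
    using deflation_split[OF assms] unfolding x'_def a_def by auto
  have "(R' + rank_one (sqrt \<mu>) v) *v ((R' + rank_one (sqrt \<mu>) v) *v x)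
      = R' *v (R' *v x') + (complex_of_real (sqrt \<mu>) * complex_of_real (sqrt \<mu>) * a) *s v"
    by (simp add: deflation_mult_vec R'_x a_def[symmetric] vec.add vec.scale deflation_mult_eigvec
        deflation_cinner_eigvec cinner_add_right cinner_scale_right v(2) mult_ac)
  also have "\<dots> = H *v x' + (complex_of_real \<mu> * a) *s v"
    using R' \<open>x' \<in> S\<close> \<open>cinner v x' = 0\<close> \<mu> by (simp add: hpd_root_on_def flip: of_real_mult)
  also have "\<dots> = H *v x"
    by (simp add: x'_def vec.diff vec.scale eigen vector_smult_assoc mult.commute)
  finally show ?thesis .
qed

lemma deflation_pos:
  assumes "x \<in> S" "x \<noteq> 0"
  shows "0 < inner x ((R' + rank_one (sqrt \<mu>) v) *v x)"
proof -
  define a where "a = cinner v x"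
  define x' where "x' = x - a *s v"
  have "x' \<in> S" "cinner v x' = 0" and R'_x: "R' *v x = R' *v x'"
    using deflation_split[OF assms(1)] unfolding x'_def a_def by auto
  have "cinner x (R' *v x) = cinner x' (R' *v x')"
    by (simp add: R'_x x'_def cinner_diff_left cinner_scale_left deflation_cinner_eigvec)
  then have "cinner x ((R' + rank_one (sqrt \<mu>) v) *v x)
      = cinner x' (R' *v x') + complex_of_real (sqrt \<mu>) * (a * cinner x v)"
    by (simp add: deflation_mult_vec cinner_add_right cinner_scale_right a_def mult_ac)
  also have "a * cinner x v = complex_of_real ((cmod a)\<^sup>2)"
    by (metis a_def cinner_commute complex_norm_square)
  finally have form: "inner x ((R' + rank_one (sqrt \<mu>) v) *v x)
      = inner x' (R' *v x') + sqrt \<mu> * (cmod a)\<^sup>2"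
    by (simp add: Re_cinner del: of_real_power flip: of_real_mult Re_cinner)
  show ?thesis
  proof (cases "x' = 0")
    case True
    then have "a \<noteq> 0"
      using \<open>x \<noteq> 0\<close> by (auto simp: x'_def)
    then show ?thesis
      using form True \<mu> by simp
  next
    case False
    then have "0 < inner x' (R' *v x')"
      using R' \<open>x' \<in> S\<close> \<open>cinner v x' = 0\<close> by (simp add: hpd_root_on_def)
    then show ?thesis
      using form \<mu> by (simp add: add_pos_nonneg)
  qed
qed

lemma hpd_root_on_extend: "hpd_root_on S H (R' + rank_one (sqrt \<mu>) v)"
  unfolding hpd_root_on_def
proof (intro conjI allI ballI impI)
  show "cadj (R' + rank_one (sqrt \<mu>) v) = R' + rank_one (sqrt \<mu>) v"
    using R' by (simp add: hpd_root_on_def cadj_add cadj_rank_one)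
  show "(R' + rank_one (sqrt \<mu>) v) *v x = 0" if "\<forall>s\<in>S. cinner s x = 0" for x
    using that R' v(1) by (simp add: deflation_mult_vec hpd_root_on_def)
qed (simp_all add: deflation_square deflation_pos)

end

lemma subspace_if_vec_subspace:
  fixes S :: "(complex^'n) set"
  assumes "vec.subspace S"
  shows "subspace S"
  using assms unfolding subspace_def vec.subspace_def by (simp add: scaleR_eq_scale_of_real)

lemma deflated_subspace:
  fixes H :: "complex^'n^'n" and S :: "(complex^'n) set" and v :: "complex^'n"
  defines "S' \<equiv> S \<inter> {x. cinner v x = 0}"
  assumes "cadj H = H" "vec.subspace S" "(*v) H ` S \<subseteq> S"
    and "v \<in> S" "cinner v v = 1" "H *v v = complex_of_real \<mu> *s v"
  shows "vec.subspace S'" and "(*v) H ` S' \<subseteq> S'" and "vec.dim S' < vec.dim S"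
proof -
  have "vec.subspace {x. cinner v x = 0}"
    by (simp add: vec.subspace_def cinner_add_right cinner_scale_right)
  then show "vec.subspace S'"
    unfolding S'_def using assms(3) vec.subspace_inter by blast
  have "cinner v (H *v x) = complex_of_real \<mu> * cinner v x" for x
    using cinner_cadj[of v H x] assms(2,7) by (simp add: cinner_scale_left)
  then show "(*v) H ` S' \<subseteq> S'"
    using assms(4) unfolding S'_def by auto
  have "v \<notin> S'"
    using assms(6) by (simp add: S'_def)
  then have "S' \<subset> S"
    using assms(5) unfolding S'_def by blast
  moreover have "vec.span S' = S'" "vec.span S = S"
    using \<open>vec.subspace S'\<close> assms(3) by (simp_all add: vec.span_eq_iff)
  ultimately show "vec.dim S' < vec.dim S"
    using vec.dim_psubset[of S' S] by metis
qed

lemma hpd_root_on_exists: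
  fixes H :: "complex^'n^'n"
  assumes H: "cadj H = H" "pos_definite ((*v) H)"
  shows "vec.subspace S \<Longrightarrow> (*v) H ` S \<subseteq> S \<Longrightarrow> \<exists>R. hpd_root_on S H R"
proof (induction "vec.dim S" arbitrary: S rule: less_induct)
  case less
  show ?case
  proof (cases "S = {0}")
    case True
    then show ?thesis
      using hpd_root_on_zero by blast
  next
    case False
    obtain v where "v \<in> S" "norm v = 1" and eigen: "H *v v = inner v (H *v v) *\<^sub>R v"
      using selfadjoint_top_eigenvector[OF matrix_vector_mul_linear selfadjoint_if_hermitian[OF H(1)]
          subspace_if_vec_subspace[OF less.prems(1)] less.prems(2) False]
      by blast
    define \<mu> where "\<mu> = inner v (H *v v)"
    have "\<mu> > 0"
      using H(2) \<open>norm v = 1\<close> unfolding \<mu>_def pos_definite_def by (metis norm_zero zero_neq_one)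
    have "cinner v v = 1"
      using \<open>norm v = 1\<close> by (simp add: cinner_self)
    have eigen': "H *v v = complex_of_real \<mu> *s v"
      using eigen by (simp add: \<mu>_def scaleR_eq_scale_of_real)
    note S' = deflated_subspace[OF H(1) less.prems \<open>v \<in> S\<close> \<open>cinner v v = 1\<close> eigen']
    obtain R' where "hpd_root_on (S \<inter> {x. cinner v x = 0}) H R'"
      using less.hyps[OF S'(3,1,2)] by blast
    from hpd_root_on_extend[OF less.prems(1) \<open>v \<in> S\<close> \<open>cinner v v = 1\<close> eigen' \<open>\<mu> > 0\<close> this]
    show ?thesis ..
  qed
qed

lemma hpd_root_exists:
  fixes H :: "complex^'n^'n"
  assumes "hpd_mat H"
  shows "\<exists>R. hpd_mat R \<and> R ** R = H"
proof -
  have H: "cadj H = H" "pos_definite ((*v) H)"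
    using assms by (simp_all add: hpd_mat_iff)
  obtain R where "hpd_root_on UNIV H R"
    using hpd_root_on_exists[OF H vec.subspace_UNIV] by blast
  then have "hpd_mat R" "R ** R = H"
    by (simp_all add: hpd_root_on_def hpd_mat_iff pos_definite_def matrix_eq
        flip: matrix_vector_mul_assoc)
  then show ?thesis
    by blast
qed

lemma hpd_root_unique:
  fixes R1 R2 :: "complex^'n^'n"
  assumes "hpd_mat R1" "hpd_mat R2" "R1 ** R1 = R2 ** R2"
  shows "R1 = R2"
proof -
  have "(*v) R1 = (*v) R2"
  proof (rule pos_definite_sqrt_unique)
    show "linear ((*v) R1)" "linear ((*v) R2)"
      by simp_all
    show "selfadjoint ((*v) R1)" "selfadjoint ((*v) R2)"
      using assms(1,2) by (simp_all add: hpd_mat_iff selfadjoint_if_hermitian)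
    show "pos_definite ((*v) R1)" "pos_definite ((*v) R2)"
      using assms(1,2) by (simp_all add: hpd_mat_iff)
    show "(*v) R1 \<circ> (*v) R1 = (*v) R2 \<circ> (*v) R2"
      using assms(3) by (simp add: fun_eq_iff matrix_vector_mul_assoc)
  qed
  then show ?thesis
    by (metis matrix_of_matrix_vector_mul)
qed

lemma hpd_sqrt:
  fixes H :: "complex^'n^'n"
  assumes "hpd_mat H"
  shows "hpd_mat (hpd_sqrt H)" and "hpd_sqrt H ** hpd_sqrt H = H"
proof -
  have "\<exists>!R. hpd_mat R \<and> R ** R = H"
    by (rule ex_ex1I[OF hpd_root_exists[OF assms]]) (metis hpd_root_unique)
  from theI'[OF this] show "hpd_mat (hpd_sqrt H)" and "hpd_sqrt H ** hpd_sqrt H = H"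
    unfolding hpd_sqrt_def by simp_all
qed

lemma invertible_if_hpd_mat:
  fixes R :: "complex^'n^'n"
  assumes "hpd_mat R"
  shows "invertible R"
  unfolding invertible_left_inverse matrix_left_invertible_ker
  using assms by (metis hpd_mat_iff inner_zero_right less_irrefl pos_definite_def)

section \<open>The spectrum of a complex matrix\<close>

lemma poly_det:
  fixes P :: "'n::finite \<Rightarrow> 'n \<Rightarrow> 'a::comm_ring_1 poly"
  shows "poly (det (\<chi> i j. P i j)) x = det (\<chi> i j. poly (P i j) x)"
  unfolding det_def by (simp add: poly_sum poly_prod)

lemma mat_spectrum_iff_det: "l \<in> mat_spectrum M \<longleftrightarrow> det (M - mat l) = 0"
proof -
  have "(M - mat l) *v v = M *v v - l *s v" for v
    by (simp add: matrix_vector_mult_diff_rdistrib mat_mult_vec)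
  then have "l \<in> mat_spectrum M \<longleftrightarrow> \<not> invertible (M - mat l)"
    unfolding mat_spectrum_def invertible_left_inverse matrix_left_invertible_ker by auto
  then show ?thesis
    by (simp add: invertible_det_nz)
qed

definition charpoly :: "complex^'n^'n \<Rightarrow> complex poly" where
  "charpoly M = det (\<chi> i j. [:M$i$j, - (if i = j then 1 else 0):])"

(* rev_charpoly M t = det (I - t M) is visibly nonzero, being 1 at t = 0, and its roots are
   the reciprocals of the nonzero eigenvalues. *)
definition rev_charpoly :: "complex^'n^'n \<Rightarrow> complex poly" where
  "rev_charpoly M = det (\<chi> i j. [:if i = j then 1 else 0, - M$i$j:])"

lemma poly_charpoly: "poly (charpoly M) l = det (M - mat l)"
proof -
  have "(\<chi> i j. poly [:M$i$j, - (if i = j then 1 else 0):] l) = M - mat l"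
    by (simp add: vec_eq_iff mat_def)
  then show ?thesis
    unfolding charpoly_def poly_det by simp
qed

lemma poly_rev_charpoly_0: "poly (rev_charpoly M) 0 = 1"
proof -
  have "(\<chi> i j. poly [:if i = j then 1 else 0, - M$i$j:] 0) = mat 1"
    by (simp add: vec_eq_iff mat_def)
  then show ?thesis
    unfolding rev_charpoly_def poly_det by simp
qed

lemma poly_rev_charpoly:
  fixes M :: "complex^'n^'n"
  assumes "t \<noteq> 0"
  shows "poly (rev_charpoly M) t = (- t) ^ CARD('n) * poly (charpoly M) (1 / t)"
proof -
  have rows: "(\<chi> i j. poly [:if i = j then 1 else 0, - M$i$j:] t) = (\<chi> i. (- t) *s (M - mat (1 / t))$i)"
    using assms by (simp add: vec_eq_iff mat_def algebra_simps)
  show ?thesis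
    unfolding rev_charpoly_def poly_det rows det_rows_mul
    by (simp add: poly_charpoly del: vector_minus_component)
qed

lemma finite_mat_spectrum: "finite (mat_spectrum (M::complex^'n^'n))"
proof -
  have "rev_charpoly M \<noteq> 0"
    using poly_rev_charpoly_0[of M] by auto
  then have "finite ((\<lambda>t. 1 / t) ` {t. poly (rev_charpoly M) t = 0})"
    using poly_roots_finite by blast
  moreover have "mat_spectrum M \<subseteq> insert 0 ((\<lambda>t. 1 / t) ` {t. poly (rev_charpoly M) t = 0})"
  proof
    fix l assume "l \<in> mat_spectrum M"
    then have "poly (rev_charpoly M) (1 / l) = 0" if "l \<noteq> 0"
      using that by (simp add: poly_rev_charpoly poly_charpoly mat_spectrum_iff_det)
    then show "l \<in> insert 0 ((\<lambda>t. 1 / t) ` {t. poly (rev_charpoly M) t = 0})"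
      by (cases "l = 0") (auto intro!: image_eqI[of l _ "1 / l"])
  qed
  ultimately show ?thesis
    by (meson finite_insert finite_subset)
qed

lemma mat_spectrum_nonempty: "mat_spectrum (M::complex^'n^'n) \<noteq> {}"
proof
  assume "mat_spectrum M = {}"
  then have "poly (charpoly M) l \<noteq> 0" for l
    by (simp add: poly_charpoly mat_spectrum_iff_det[symmetric])
  then have "constant (poly (charpoly M))"
    using fundamental_theorem_of_algebra by blast
  then have const: "poly (charpoly M) l = poly (charpoly M) 0" for l
    unfolding constant_def by blast
  define r where "r = rev_charpoly M - smult (poly (charpoly M) 0) ([:0, -1:] ^ CARD('n))"
  have "{t. t \<noteq> 0} \<subseteq> {t. poly r t = 0}"
    using const by (auto simp: r_def poly_rev_charpoly)
  moreover have "infinite {t::complex. t \<noteq> 0}"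
    using infinite_UNIV_char_0[where 'a=complex] by (simp add: Collect_neg_eq Compl_eq_Diff_UNIV)
  ultimately have "r = 0"
    using poly_roots_finite finite_subset by blast
  moreover have "poly r 0 = 1"
    using zero_less_card_finite by (simp add: r_def poly_rev_charpoly_0 power_0_left)
  ultimately show False
    by simp
qed

lemma spec_radius_attained:
  fixes M :: "complex^'n^'n"
  obtains l where "l \<in> mat_spectrum M" and "spec_radius M = norm l"
proof -
  have "spec_radius M \<in> norm ` mat_spectrum M"
    unfolding spec_radius_def
    using finite_mat_spectrum mat_spectrum_nonempty by (intro Max_in) auto
  then show thesis
    using that by auto
qed

section \<open>Accretive matrices and Cayley transforms\<close>

definition accretive :: "('a::real_inner \<Rightarrow> 'a) \<Rightarrow> bool" where
  "accretive f \<longleftrightarrow> (\<forall>x. 0 \<le> inner x (f x))"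

lemma norm_add_square: "(norm (x + y))\<^sup>2 = (norm x)\<^sup>2 + (norm y)\<^sup>2 + 2 * inner x (y::'a::real_inner)"
  by (simp add: power2_norm_eq_inner inner_add inner_commute)

lemma norm_diff_square: "(norm (x - y))\<^sup>2 = (norm x)\<^sup>2 + (norm y)\<^sup>2 - 2 * inner x (y::'a::real_inner)"
  by (simp add: power2_norm_eq_inner inner_diff inner_commute)

lemma accretive_norm_diff_le_norm_add:
  assumes "accretive f"
  shows "norm (x - f x) \<le> norm (x + f x)"
proof -
  have "(norm (x - f x))\<^sup>2 \<le> (norm (x + f x))\<^sup>2"
    using assms by (simp add: accretive_def norm_add_square norm_diff_square)
  then show ?thesis
    by (simp add: power2_le_iff_abs_le)
qed

lemma accretive_add_id_eq_0:
  assumes "accretive f" and "x + f x = 0"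
  shows "x = 0"
proof -
  have "(norm x)\<^sup>2 + (norm (f x))\<^sup>2 + 2 * inner x (f x) = 0"
    using assms(2) by (simp flip: norm_add_square)
  then show ?thesis
    using assms(1) unfolding accretive_def by (smt (verit) zero_le_power2 zero_less_norm_iff zero_less_power2)
qed

lemma id_add_mult_vec: "(mat 1 + Q) *v w = w + Q *v (w::'a::ring_1^'n)"
  and id_diff_mult_vec: "(mat 1 - Q) *v w = w - Q *v (w::'a::ring_1^'n)"
  by (simp_all add: matrix_vector_mult_add_rdistrib matrix_vector_mult_diff_rdistrib)

lemma invertible_id_add_accretive:
  fixes Q :: "complex^'n^'n"
  assumes "accretive ((*v) Q)"
  shows "invertible (mat 1 + Q)"
  unfolding invertible_left_inverse matrix_left_invertible_ker
  by (metis accretive_add_id_eq_0[OF assms] id_add_mult_vec)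

lemma Re_cquad_add_cadj: "Re (cquad (Q + cadj Q) x) = 2 * inner x (Q *v x)"
proof -
  have "cinner x (cadj Q *v x) = cnj (cinner x (Q *v x))"
    using cinner_cadj[of x "cadj Q" x] cinner_commute[of "Q *v x" x] by simp
  then show ?thesis
    by (simp add: cquad_eq_cinner matrix_vector_mult_add_rdistrib cinner_add_right
        flip: Re_cinner)
qed

lemma Re_cquad_id_add_cadj_mult:
  "Re (cquad (mat 1 + cadj Q ** Q) x) = (norm x)\<^sup>2 + (norm (Q *v x))\<^sup>2"
proof -
  have "cinner x (cadj Q *v (Q *v x)) = cinner (Q *v x) (Q *v x)"
    using cinner_cadj[of x "cadj Q" "Q *v x"] by simp
  then show ?thesis
    by (simp add: cquad_eq_cinner matrix_vector_mult_add_rdistrib cinner_add_right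
        cinner_self flip: matrix_vector_mul_assoc)
qed

lemma accretive_if_psd_gen: "psd_gen P \<Longrightarrow> accretive ((*v) P)"
  using Re_cquad_add_cadj[of P]
  by (fastforce simp: psd_gen_def hpsd_mat_def accretive_def)

lemma accretive_congruence:
  assumes "accretive ((*v) P)"
  shows "accretive ((*v) (cadj S ** P ** S))"
  unfolding accretive_def
proof
  fix x
  have "inner x ((cadj S ** P ** S) *v x) = inner (S *v x) (P *v (S *v x))"
    using cinner_cadj[of x "cadj S" "P *v (S *v x)"]
    by (simp add: matrix_vector_mul_assoc[symmetric] flip: Re_cinner)
  then show "0 \<le> inner x ((cadj S ** P ** S) *v x)"
    using assms by (simp add: accretive_def)
qed

lemma cayley_mult_commute:
  fixes Q :: "complex^'n^'n"
  shows "(mat 1 - Q) *v ((mat 1 + Q) *v w) = (mat 1 + Q) *v ((mat 1 - Q) *v w)"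
  by (simp add: id_add_mult_vec id_diff_mult_vec vec.add vec.diff)

lemma cayley_mult_id_add:
  fixes Q :: "complex^'n^'n"
  assumes "invertible (mat 1 + Q)"
  shows "(matrix_inv (mat 1 + Q) ** (mat 1 - Q)) *v ((mat 1 + Q) *v w) = (mat 1 - Q) *v w"
  by (simp add: cayley_mult_commute matrix_inv_mult_vec_cancel[OF assms] flip: matrix_vector_mul_assoc)

lemma fmap_nonneg: "0 \<le> fmap Q"
  unfolding fmap_def spec_norm_def by (simp add: onorm_pos_le)

lemma norm_id_diff_le_fmap:
  fixes Q :: "complex^'n^'n"
  assumes "invertible (mat 1 + Q)"
  shows "norm ((mat 1 - Q) *v w) \<le> fmap Q * norm ((mat 1 + Q) *v w)"
  unfolding fmap_def spec_norm_def
  using onorm[OF matrix_vector_mul_bounded_linear] cayley_mult_id_add[OF assms] by metis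

lemma fmap_le_1:
  fixes Q :: "complex^'n^'n"
  assumes "accretive ((*v) Q)"
  shows "fmap Q \<le> 1"
  unfolding fmap_def spec_norm_def
proof (rule onorm_le)
  fix y :: "complex^'n"
  have inv: "invertible (mat 1 + Q)"
    using invertible_id_add_accretive[OF assms] .
  define w where "w = matrix_inv (mat 1 + Q) *v y"
  have y: "y = (mat 1 + Q) *v w"
    by (simp add: w_def matrix_inv_mult_vec_cancel[OF inv])
  show "norm ((matrix_inv (mat 1 + Q) ** (mat 1 - Q)) *v y) \<le> 1 * norm y"
    unfolding y cayley_mult_id_add[OF inv]
    using accretive_norm_diff_le_norm_add[OF assms, of w]
    by (simp add: id_add_mult_vec id_diff_mult_vec)
qed

lemma mval_eq: "mval Q R x = fmap R * (norm ((mat 1 - Q) *v x) / norm ((mat 1 + Q) *v x))"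
proof -
  have "Re (cquad (mat 1 + cadj Q ** Q) x) - Re (cquad (Q + cadj Q) x) = (norm ((mat 1 - Q) *v x))\<^sup>2"
    and "Re (cquad (mat 1 + cadj Q ** Q) x) + Re (cquad (Q + cadj Q) x) = (norm ((mat 1 + Q) *v x))\<^sup>2"
    by (simp_all add: Re_cquad_id_add_cadj_mult Re_cquad_add_cadj id_add_mult_vec id_diff_mult_vec
        norm_add_square norm_diff_square)
  then show ?thesis
    unfolding mval_def by (simp add: real_sqrt_divide)
qed

lemma mval_nonneg: "0 \<le> mval Q R x"
  by (simp add: mval_eq fmap_nonneg)

lemma mval_le_1:
  assumes "accretive ((*v) Q)" "accretive ((*v) R)"
  shows "mval Q R x \<le> 1"
proof -
  have "norm ((mat 1 - Q) *v x) / norm ((mat 1 + Q) *v x) \<le> 1"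
    using accretive_norm_diff_le_norm_add[OF assms(1), of x]
    by (simp add: divide_le_eq_1 id_add_mult_vec id_diff_mult_vec)
  from mult_le_one[OF fmap_le_1[OF assms(2)] _ this] show ?thesis
    by (simp add: mval_eq)
qed

section \<open>The PPS iteration\<close>

lemma accretive_hpd_sqrt_congruence:
  fixes P \<Sigma> :: "complex^'n^'n"
  assumes "psd_gen P" "hpd_mat \<Sigma>"
  shows "accretive ((*v) (matrix_inv (hpd_sqrt \<Sigma>) ** P ** matrix_inv (hpd_sqrt \<Sigma>)))"
proof -
  have "cadj (matrix_inv (hpd_sqrt \<Sigma>)) = matrix_inv (hpd_sqrt \<Sigma>)"
    using hpd_sqrt(1)[OF assms(2)] invertible_if_hpd_mat cadj_matrix_inv hpd_mat_iff by metis
  then show ?thesis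
    using accretive_congruence[OF accretive_if_psd_gen[OF assms(1)]] by metis
qed

lemma square_add_diff_eq_congruence:
  fixes R \<Sigma> P :: "complex^'n^'n"
  assumes "invertible R" "R ** R = \<Sigma>"
  shows "\<Sigma> + P = R ** (mat 1 + matrix_inv R ** P ** matrix_inv R) ** R"
    and "\<Sigma> - P = R ** (mat 1 - matrix_inv R ** P ** matrix_inv R) ** R"
proof -
  have "\<Sigma> *v w = R *v (R *v w)" for w
    using assms(2) by (simp add: matrix_vector_mul_assoc)
  then show "\<Sigma> + P = R ** (mat 1 + matrix_inv R ** P ** matrix_inv R) ** R"
    and "\<Sigma> - P = R ** (mat 1 - matrix_inv R ** P ** matrix_inv R) ** R"
    by (simp_all add: matrix_eq id_add_mult_vec id_diff_mult_vec matrix_vector_mult_add_rdistrib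
        matrix_vector_mult_diff_rdistrib vec.add vec.diff matrix_inv_mult_vec_cancel[OF assms(1)]
        flip: matrix_vector_mul_assoc)
qed

lemma Gamma_PPS_eigen_congruence:
  fixes R \<Sigma> P1 P2 :: "complex^'n^'n"
  defines "T1 \<equiv> matrix_inv R ** P1 ** matrix_inv R"
    and "T2 \<equiv> matrix_inv R ** P2 ** matrix_inv R"
  assumes R: "invertible R" "R ** R = \<Sigma>"
    and inv: "invertible (mat 1 + T1)" "invertible (mat 1 + T2)"
    and eigen: "Gamma_PPS \<Sigma> P1 P2 *v v = l *s v"
  obtains z where "(mat 1 + T2) *v z = (mat 1 - T1) *v (R *v v)"
    and "(mat 1 - T2) *v z = l *s ((mat 1 + T1) *v (R *v v))"
proof -
  have factor: "\<Sigma> + P1 = R ** (mat 1 + T1) ** R" "\<Sigma> - P1 = R ** (mat 1 - T1) ** R"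
    "\<Sigma> + P2 = R ** (mat 1 + T2) ** R" "\<Sigma> - P2 = R ** (mat 1 - T2) ** R"
    unfolding T1_def T2_def by (simp_all add: square_add_diff_eq_congruence[OF R])
  have "invertible (\<Sigma> + P1)" "invertible (\<Sigma> + P2)"
    by (simp_all add: factor invertible_mult R(1) inv)
  define u where "u = matrix_inv (\<Sigma> + P2) *v ((\<Sigma> - P1) *v v)"
  have "(\<Sigma> + P2) *v u = (\<Sigma> - P1) *v v"
    by (simp add: u_def matrix_inv_mult_vec_cancel(2)[OF \<open>invertible (\<Sigma> + P2)\<close>])
  moreover have "(\<Sigma> - P2) *v u = l *s ((\<Sigma> + P1) *v v)"
  proof -
    have "matrix_inv (\<Sigma> + P1) *v ((\<Sigma> - P2) *v u) = l *s v"
      using eigen by (simp add: Gamma_PPS_def u_def matrix_vector_mul_assoc matrix_mul_assoc)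
    then show ?thesis
      by (metis matrix_inv_mult_vec_cancel(2)[OF \<open>invertible (\<Sigma> + P1)\<close>] vec.scale)
  qed
  ultimately have "R *v ((mat 1 + T2) *v (R *v u)) = R *v ((mat 1 - T1) *v (R *v v))"
    and "R *v ((mat 1 - T2) *v (R *v u)) = R *v (l *s ((mat 1 + T1) *v (R *v v)))"
    by (simp_all add: factor vec.scale flip: matrix_vector_mul_assoc)
  with inj_matrix_vector_mult[OF R(1)] show thesis
    using that[of "R *v u"] by (auto dest: injD)
qed

context
  fixes T1 T2 :: "complex^'n^'n" and x z :: "complex^'n" and l :: complex
  assumes accretive: "accretive ((*v) T1)" "accretive ((*v) T2)"
    and pps_add: "(mat 1 + T2) *v z = (mat 1 - T1) *v x"
    and pps_diff: "(mat 1 - T2) *v z = l *s ((mat 1 + T1) *v x)"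
begin

lemma pps_eigenvector:
  "(matrix_inv ((mat 1 + T2) ** (mat 1 + T1)) ** ((mat 1 - T2) ** (mat 1 - T1))) *v x = l *s x"
proof -
  have inv: "invertible ((mat 1 + T2) ** (mat 1 + T1))"
    using invertible_id_add_accretive accretive invertible_mult by blast
  have "((mat 1 - T2) ** (mat 1 - T1)) *v x = (mat 1 - T2) *v ((mat 1 + T2) *v z)"
    by (simp add: pps_add flip: matrix_vector_mul_assoc)
  also have "\<dots> = (mat 1 + T2) *v ((mat 1 - T2) *v z)"
    by (rule cayley_mult_commute)
  also have "\<dots> = ((mat 1 + T2) ** (mat 1 + T1)) *v (l *s x)"
    by (simp add: pps_diff vec.scale flip: matrix_vector_mul_assoc)
  finally show ?thesis
    by (metis matrix_inv_mult_vec_cancel(1)[OF inv] matrix_vector_mul_assoc)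
qed

lemma pps_partner_eq: "matrix_inv (mat 1 + T2) *v ((mat 1 - T1) *v x) = z"
  using matrix_inv_mult_vec_cancel(1)[OF invertible_id_add_accretive[OF accretive(2)]]
  by (simp flip: pps_add)

lemma pps_id_add_nonzero:
  assumes "x \<noteq> 0"
  shows "(mat 1 + T1) *v x \<noteq> 0"
  using assms inj_matrix_vector_mult[OF invertible_id_add_accretive[OF accretive(1)]]
  by (metis injD matrix_vector_mult_0_right)

lemma norm_le_mval_1:
  assumes "x \<noteq> 0"
  shows "norm l \<le> mval T1 T2 x"
proof -
  have "0 < norm ((mat 1 + T1) *v x)"
    using pps_id_add_nonzero[OF assms] by simp
  moreover have "norm l * norm ((mat 1 + T1) *v x) \<le> fmap T2 * norm ((mat 1 - T1) *v x)"
    using norm_id_diff_le_fmap[OF invertible_id_add_accretive[OF accretive(2)], of z]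
    by (simp add: pps_add pps_diff norm_scale_vec)
  ultimately show ?thesis
    by (simp add: mval_eq pos_le_divide_eq mult_ac)
qed

lemma norm_le_mval_2:
  assumes "x \<noteq> 0"
  shows "norm l \<le> mval T2 T1 z"
proof (cases "(mat 1 - T1) *v x = 0")
  case True
  then have "z = 0"
    using pps_add inj_matrix_vector_mult[OF invertible_id_add_accretive[OF accretive(2)]]
    by (metis injD matrix_vector_mult_0_right)
  then have "l = 0"
    using pps_diff pps_id_add_nonzero[OF assms] by simp
  then show ?thesis
    by (simp add: mval_nonneg)
next
  case False
  have "norm l * norm ((mat 1 - T1) *v x) \<le> norm l * (fmap T1 * norm ((mat 1 + T1) *v x))"
    using norm_id_diff_le_fmap[OF invertible_id_add_accretive[OF accretive(1)], of x]
    by (simp add: mult_left_mono)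
  then show ?thesis
    using False by (simp add: mval_eq pps_add pps_diff norm_scale_vec pos_le_divide_eq mult_ac)
qed

end

lemma Gamma_PPS_eigenvalue_bound:
  fixes \<Sigma> P1 P2 :: "complex^'n^'n"
  defines "Sh \<equiv> matrix_inv (hpd_sqrt \<Sigma>)"
  defines "T1 \<equiv> Sh ** P1 ** Sh" and "T2 \<equiv> Sh ** P2 ** Sh"
  assumes "psd_gen P1" "psd_gen P2" "hpd_mat \<Sigma>"
    and "l \<in> mat_spectrum (Gamma_PPS \<Sigma> P1 P2)"
  obtains x where "x \<noteq> 0"
    "(matrix_inv ((mat 1 + T2) ** (mat 1 + T1)) ** ((mat 1 - T2) ** (mat 1 - T1))) *v x = l *s x"
    "norm l \<le> mval T1 T2 x"
    "norm l \<le> mval T2 T1 (matrix_inv (mat 1 + T2) *v ((mat 1 - T1) *v x))"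
proof -
  define R where "R = hpd_sqrt \<Sigma>"
  have R: "invertible R" "R ** R = \<Sigma>"
    using hpd_sqrt[OF assms(6)] invertible_if_hpd_mat by (auto simp: R_def)
  have accretive: "accretive ((*v) T1)" "accretive ((*v) T2)"
    using accretive_hpd_sqrt_congruence assms(4-6) unfolding T1_def T2_def Sh_def by blast+
  obtain v where "v \<noteq> 0" and eigen: "Gamma_PPS \<Sigma> P1 P2 *v v = l *s v"
    using assms(7) unfolding mat_spectrum_def by blast
  have "T1 = matrix_inv R ** P1 ** matrix_inv R" "T2 = matrix_inv R ** P2 ** matrix_inv R"
    by (simp_all add: T1_def T2_def Sh_def R_def)
  from Gamma_PPS_eigen_congruence[OF R, of P1 P2, folded this, OF
      invertible_id_add_accretive[OF accretive(1)] invertible_id_add_accretive[OF accretive(2)] eigen]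
  obtain z where "(mat 1 + T2) *v z = (mat 1 - T1) *v (R *v v)"
    "(mat 1 - T2) *v z = l *s ((mat 1 + T1) *v (R *v v))" .
  note pps = accretive this
  have "R *v v \<noteq> 0"
    using \<open>v \<noteq> 0\<close> inj_matrix_vector_mult[OF R(1)] by (metis injD matrix_vector_mult_0_right)
  from this pps_eigenvector[OF pps] norm_le_mval_1[OF pps this] norm_le_mval_2[OF pps this]
  show thesis
    by (rule that[of "R *v v", unfolded pps_partner_eq[OF pps]])
qed

theorem theorem3p2:
  fixes A P1 P2 \<Sigma> :: "complex^'n^'n"
  assumes "invertible A"
    and "A = P1 + P2"
    and "psd_gen P1" and "psd_gen P2"
    and "hpd_mat \<Sigma>"
  defines "Sh \<equiv> matrix_inv (hpd_sqrt \<Sigma>)"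
  defines "T1 \<equiv> Sh ** P1 ** Sh"
  defines "T2 \<equiv> Sh ** P2 ** Sh"
  defines "Tp \<equiv> (mat 1 + T2) ** (mat 1 + T1)"
  defines "Tm \<equiv> (mat 1 - T2) ** (mat 1 - T1)"
  defines "E \<equiv> eigvecs (matrix_inv Tp ** Tm)"
  defines "y \<equiv> (\<lambda>x. matrix_inv (mat 1 + T2) *v ((mat 1 - T1) *v x))"
  shows "(\<forall>x. x \<noteq> 0 \<longrightarrow> mval T1 T2 x \<le> 1 \<and> mval T2 T1 x \<le> 1)
    \<and> (\<forall>l \<in> mat_spectrum (Gamma_PPS \<Sigma> P1 P2).
          \<exists>x \<in> E. norm l \<le> min (mval T1 T2 x) (mval T2 T1 (y x)))
    \<and> spec_radius (Gamma_PPS \<Sigma> P1 P2) \<le> (SUP x\<in>E. min (mval T1 T2 x) (mval T2 T1 (y x)))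
    \<and> (SUP x\<in>E. min (mval T1 T2 x) (mval T2 T1 (y x))) \<le> 1"
proof -
  define m where "m x = min (mval T1 T2 x) (mval T2 T1 (y x))" for x
  have accretive: "accretive ((*v) T1)" "accretive ((*v) T2)"
    using accretive_hpd_sqrt_congruence assms(3-5) unfolding T1_def T2_def Sh_def by blast+
  have m_le_1: "m x \<le> 1" for x
    using mval_le_1[OF accretive] by (simp add: m_def min.coboundedI1)
  have bound: "\<forall>l \<in> mat_spectrum (Gamma_PPS \<Sigma> P1 P2). \<exists>x \<in> E. norm l \<le> m x"
    using Gamma_PPS_eigenvalue_bound[OF assms(3-5)]
    unfolding E_def eigvecs_def m_def y_def Tp_def Tm_def T1_def T2_def Sh_def
    by (metis (mono_tags, lifting) mem_Collect_eq min.bounded_iff)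
  have "spec_radius (Gamma_PPS \<Sigma> P1 P2) \<le> (SUP x\<in>E. m x)"
  proof -
    obtain l where "l \<in> mat_spectrum (Gamma_PPS \<Sigma> P1 P2)" "spec_radius (Gamma_PPS \<Sigma> P1 P2) = norm l"
      by (rule spec_radius_attained)
    then show ?thesis
      using bound m_le_1 by (metis bdd_aboveI2 cSUP_upper2)
  qed
  moreover have "(SUP x\<in>E. m x) \<le> 1"
    using bound mat_spectrum_nonempty m_le_1 by (metis all_not_in_conv cSUP_least image_is_empty)
  ultimately show ?thesis
    using mval_le_1[OF accretive] mval_le_1[OF accretive(2,1)] bound unfolding m_def by blast
qed

end
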